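(* For $n\ge 3$, let $\mathscr{L}_n=\langle Q,\{a,b\},\delta\rangle$ with $Q=\{0,1,\dots,n-1\}$, where $\delta(i,b)=i+1$ for $0\le i\le n-2$ and $\delta(n-1,b)=0$; $\delta(i,a)=i+1$ for $0\le i\le n-4$, $\delta(n-3,a)=n-1$, $\delta(n-2,a)=0$ and $\delta(n-1,a)=0$. Then $sc(Syn(\mathscr{L}_n))=2^n-n$.
   Context: For a DFA $\mathscr{A}=\langle Q,\Sigma,\delta\rangle$ (total transition function, extended to words), $Syn(\mathscr{A})$ is the set of words $w\in\Sigma^*$ such that $\delta(q,w)=\delta(q',w)$ for all $q,q'\in Q$. The state complexity $sc(L)$ of a regular language $L$ is the number of states of the minimal (complete) DFA recognizing $L$. *)

theory Defs
  imports Main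
begin

datatype letter = a | b

definition delta_star :: "('q \<Rightarrow> 's \<Rightarrow> 'q) \<Rightarrow> 'q \<Rightarrow> 's list \<Rightarrow> 'q" where
  "delta_star \<delta> q w = foldl \<delta> q w"

definition Syn :: "'q set \<Rightarrow> ('q \<Rightarrow> 's \<Rightarrow> 'q) \<Rightarrow> 's list set" where
  "Syn Q \<delta> = {w. \<forall>q\<in>Q. \<forall>q'\<in>Q. delta_star \<delta> q w = delta_star \<delta> q' w}"

definition is_dfa :: "nat \<Rightarrow> nat \<Rightarrow> (nat \<Rightarrow> 's \<Rightarrow> nat) \<Rightarrow> nat set \<Rightarrow> bool" where
  "is_dfa m s t F \<longleftrightarrow> s < m \<and> (\<forall>q<m. \<forall>x. t q x < m) \<and> F \<subseteq> {0..<m}"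

definition dfa_lang :: "nat \<Rightarrow> (nat \<Rightarrow> 's \<Rightarrow> nat) \<Rightarrow> nat set \<Rightarrow> 's list set" where
  "dfa_lang s t F = {w. delta_star t s w \<in> F}"

text \<open>State complexity: number of states of a minimal complete DFA recognizing L
  (over the full alphabet given by the type 's).\<close>
definition sc :: "'s list set \<Rightarrow> nat" where
  "sc L = (LEAST m. \<exists>s t F. is_dfa m s t F \<and> dfa_lang s t F = L)"

definition deltaL :: "nat \<Rightarrow> nat \<Rightarrow> letter \<Rightarrow> nat" where
  "deltaL n i x = (case x of
      b \<Rightarrow> (if i \<le> n - 2 then i + 1 else 0)
    | a \<Rightarrow> (if i \<le> n - 4 \<and> n \<ge> 4 then i + 1
            else if i = n - 3 then n - 1
            else 0))"

end

theory Submission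
  imports Defs
begin

abbreviation act :: "('q \<Rightarrow> 's \<Rightarrow> 'q) \<Rightarrow> 's list \<Rightarrow> 'q \<Rightarrow> 'q" where
  "act \<delta> w \<equiv> \<lambda>q. delta_star \<delta> q w"

lemma delta_star_Nil [simp]: "delta_star \<delta> q [] = q"
  by (simp add: delta_star_def)

lemma delta_star_Cons [simp]: "delta_star \<delta> q (x # w) = delta_star \<delta> (\<delta> q x) w"
  by (simp add: delta_star_def)

lemma delta_star_append [simp]: "delta_star \<delta> q (u @ v) = delta_star \<delta> (delta_star \<delta> q u) v"
  by (simp add: delta_star_def)

lemma act_append_image: "act \<delta> (u @ v) ` S = act \<delta> v ` act \<delta> u ` S"
  by (simp add: image_image)

lemma card_image_less_if_collision:
  assumes "finite A" "x \<in> A" "y \<in> A" "x \<noteq> y" "f x = f y"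
  shows "card (f ` A) < card A"
proof -
  have "\<not> inj_on f A"
    using assms(2-5) by (auto simp: inj_on_def)
  then show ?thesis
    using card_image_le[OF assms(1), of f] inj_on_iff_eq_card[OF assms(1), of f] by linarith
qed

lemma delta_star_closed:
  assumes "\<And>q x. q \<in> Q \<Longrightarrow> \<delta> q x \<in> Q" and "q \<in> Q"
  shows "delta_star \<delta> q w \<in> Q"
  using assms(2) by (induction w arbitrary: q) (simp_all add: assms(1))

definition synchronizes :: "('q \<Rightarrow> 's \<Rightarrow> 'q) \<Rightarrow> 'q set \<Rightarrow> 's list \<Rightarrow> bool" where
  "synchronizes \<delta> S w \<longleftrightarrow> (\<forall>p\<in>S. \<forall>q\<in>S. delta_star \<delta> p w = delta_star \<delta> q w)"

lemma synchronizes_iff_card_image_le_1: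
  "finite S \<Longrightarrow> synchronizes \<delta> S w \<longleftrightarrow> card (act \<delta> w ` S) \<le> 1"
  by (auto simp: synchronizes_def card_le_Suc0_iff_eq)

lemma synchronizes_subset: "synchronizes \<delta> S w \<Longrightarrow> T \<subseteq> S \<Longrightarrow> synchronizes \<delta> T w"
  by (auto simp: synchronizes_def)

lemma synchronizes_append_iff:
  "synchronizes \<delta> S (u @ w) \<longleftrightarrow> synchronizes \<delta> (act \<delta> u ` S) w"
  by (auto simp: synchronizes_def)

lemma Syn_iff_synchronizes: "w \<in> Syn Q \<delta> \<longleftrightarrow> synchronizes \<delta> Q w"
  by (simp add: Syn_def synchronizes_def)

lemma Syn_append_closed: "w \<in> Syn Q \<delta> \<Longrightarrow> w @ z \<in> Syn Q \<delta>"
  unfolding Syn_def by (simp only: mem_Collect_eq delta_star_append) metis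

lemma append_in_Syn_iff: "u @ z \<in> Syn Q \<delta> \<longleftrightarrow> synchronizes \<delta> (act \<delta> u ` Q) z"
  by (auto simp: Syn_def synchronizes_def)

definition nudge :: "nat \<Rightarrow> nat \<Rightarrow> nat" where
  "nudge j q = (if Suc q = j then j else if q = j then Suc j else q)"

lemma pred_mod_closed_eq_atLeastLessThan:
  fixes n :: nat
  assumes "S \<subseteq> {0..<n}" "S \<noteq> {}" and closed: "\<forall>y\<in>S. (y + n - 1) mod n \<in> S"
  shows "S = {0..<n}"
proof -
  have down: "y \<in> S \<Longrightarrow> k \<le> y \<Longrightarrow> k \<in> S" for y k
  proof (induction y arbitrary: k)
    case (Suc y)
    have "Suc y < n"
      using Suc.prems(1) assms(1) by auto
    then have "(Suc y + n - 1) mod n = y"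
      by simp
    then have "y \<in> S"
      using closed Suc.prems(1) by metis
    then show ?case
      using Suc by (cases "k = Suc y") auto
  qed simp
  obtain y where "y \<in> S"
    using assms(2) by blast
  then have "0 \<in> S"
    using down by blast
  moreover have "0 < n"
    using \<open>y \<in> S\<close> assms(1) by auto
  ultimately have "n - 1 \<in> S"
    using closed by auto
  then have "k \<in> S" if "k < n" for k
    using down[of "n - 1" k] that by simp
  then show ?thesis
    using assms(1) by auto
qed

abbreviation actL :: "nat \<Rightarrow> letter list \<Rightarrow> nat \<Rightarrow> nat" where
  "actL n w \<equiv> act (deltaL n) w"

lemma deltaL_closed:
  assumes n_ge_3: "3 \<le> n"
  shows "q < n \<Longrightarrow> deltaL n q x < n"
  using n_ge_3 by (auto simp: deltaL_def split: letter.split)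

lemma actL_closed:
  assumes n_ge_3: "3 \<le> n"
  shows "q < n \<Longrightarrow> actL n w q < n"
  using delta_star_closed[of "{..<n}" "deltaL n"] deltaL_closed[OF n_ge_3] by simp

lemma deltaL_b:
  assumes n_ge_3: "3 \<le> n"
  shows "q < n \<Longrightarrow> deltaL n q b = Suc q mod n"
  using n_ge_3 by (cases "Suc q = n") (auto simp: deltaL_def)

lemma actL_replicate_b:
  assumes n_ge_3: "3 \<le> n"
  shows "q < n \<Longrightarrow> actL n (replicate r b) q = (q + r) mod n"
proof (induction r arbitrary: q)
  case (Suc r)
  then show ?case
    by (simp add: deltaL_b[OF n_ge_3] mod_add_left_eq)
qed simp

lemma bij_actL_replicate_b:
  assumes n_ge_3: "3 \<le> n"
  shows "bij_betw (actL n (replicate r b)) {0..<n} {0..<n}"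
proof (induction r)
  case 0
  show ?case
    by (simp add: bij_betw_def)
next
  case (Suc r)
  have "inj_on (\<lambda>q. deltaL n q b) {0..<n}"
    using n_ge_3 by (auto simp: inj_on_def deltaL_def split: if_splits)
  moreover have "(\<lambda>q. deltaL n q b) ` {0..<n} \<subseteq> {0..<n}"
    using deltaL_closed[OF n_ge_3] by auto
  ultimately have "bij_betw (\<lambda>q. deltaL n q b) {0..<n} {0..<n}"
    by (simp add: bij_betw_def endo_inj_surj)
  moreover have "actL n (replicate (Suc r) b) = actL n (replicate r b) \<circ> (\<lambda>q. deltaL n q b)"
    by (rule ext) simp
  ultimately show ?case
    using Suc.IH bij_betw_trans by metis
qed

lemma deltaL_a_shift: "q + 4 \<le> n \<Longrightarrow> deltaL n q a = Suc q"
  by (simp add: deltaL_def)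

lemma
  assumes n_ge_3: "3 \<le> n"
  shows deltaL_a_n3: "deltaL n (n - 3) a = n - 1"
    and deltaL_a_n2: "deltaL n (n - 2) a = 0"
    and deltaL_a_n1: "deltaL n (n - 1) a = 0"
  using n_ge_3 by (auto simp: deltaL_def)

lemma image_deltaL_a:
  assumes n_ge_3: "3 \<le> n"
    and "{0..<n} - {n - 2} \<subseteq> S" "S \<subseteq> {0..<n}"
  shows "(\<lambda>q. deltaL n q a) ` S = {0..<n} - {n - 2}"
proof
  show "(\<lambda>q. deltaL n q a) ` S \<subseteq> {0..<n} - {n - 2}"
    using assms(3) n_ge_3 by (auto simp: deltaL_def)
next
  show "{0..<n} - {n - 2} \<subseteq> (\<lambda>q. deltaL n q a) ` S"
  proof
    fix p assume p: "p \<in> {0..<n} - {n - 2}"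
    then consider "p = 0" | "p = n - 1" | "0 < p" "p + 2 < n"
      by (cases "p = 0 \<or> p = n - 1") auto
    then show "p \<in> (\<lambda>q. deltaL n q a) ` S"
    proof cases
      case 1
      then show ?thesis
        using assms(2) n_ge_3 deltaL_a_n1[OF n_ge_3] by (intro image_eqI[of _ _ "n - 1"]) auto
    next
      case 2
      then show ?thesis
        using assms(2) n_ge_3 deltaL_a_n3[OF n_ge_3] by (intro image_eqI[of _ _ "n - 3"]) auto
    next
      case 3
      then show ?thesis
        using assms(2) deltaL_a_shift[of "p - 1"] by (intro image_eqI[of _ _ "p - 1"]) auto
    qed
  qed
qed

lemma image_actL_replicate_a:
  assumes n_ge_3: "3 \<le> n"
  shows "actL n (replicate (Suc k) a) ` {0..<n} = {0..<n} - {n - 2}"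
proof (induction k)
  case 0
  show ?case using image_deltaL_a[OF n_ge_3, of "{0..<n}"] by simp
next
  case (Suc k)
  have "actL n (replicate (Suc (Suc k)) a) ` {0..<n}
      = (\<lambda>q. deltaL n q a) ` actL n (replicate (Suc k) a) ` {0..<n}"
    by (simp only: replicate_Suc[of "Suc k"] replicate_append_same[symmetric] act_append_image)
      (simp add: image_image)
  then show ?case
    using Suc.IH image_deltaL_a[OF n_ge_3, of "{0..<n} - {n - 2}"] by simp
qed

lemma actL_replicate_a_from_0:
  assumes n_ge_3: "3 \<le> n"
  shows "j + 3 \<le> n \<Longrightarrow> actL n (replicate j a) 0 = j"
proof (induction j)
  case (Suc j)
  then show ?case
    by (simp only: replicate_Suc replicate_append_same[symmetric]) (simp add: deltaL_a_shift)
qed simp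

text \<open>\<open>a\<^sup>n\<^sup>-\<^sup>1\<close> merges \<open>n - 2\<close> and \<open>n - 1\<close>: both go to \<open>0\<close> and then along \<open>0, \<dots>, n - 3, n - 1\<close>,
  which is a fixed point reached after \<open>n - 2\<close> steps.\<close>
lemma actL_replicate_a_merge:
  assumes n_ge_3: "3 \<le> n"
  shows "actL n (replicate (n - 1) a) (n - 2) = n - 1" "actL n (replicate (n - 1) a) (n - 1) = n - 1"
proof -
  have word: "replicate (n - 1) a = a # (replicate (n - 3) a @ [a])"
  proof -
    have "n - 1 = Suc (Suc (n - 3))"
      using n_ge_3 by simp
    then show ?thesis
      by (simp add: replicate_append_same)
  qed
  have "actL n (replicate (n - 3) a @ [a]) 0 = n - 1"
    using actL_replicate_a_from_0[OF n_ge_3, of "n - 3"] n_ge_3 deltaL_a_n3[OF n_ge_3] by simp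
  then show "actL n (replicate (n - 1) a) (n - 2) = n - 1" "actL n (replicate (n - 1) a) (n - 1) = n - 1"
    unfolding word using deltaL_a_n2[OF n_ge_3] deltaL_a_n1[OF n_ge_3] by simp_all
qed


definition nudge_word :: "nat \<Rightarrow> nat \<Rightarrow> letter list" where
  "nudge_word n j = replicate (n - 2 - j) b @ a # replicate (Suc j) b"

text \<open>Up to a rotation, \<open>a\<close> is the cyclic successor except at \<open>n - 3\<close> and \<open>n - 2\<close>; conjugating it
  by the rotation \<open>b\<^sup>n\<^sup>-\<^sup>2\<^sup>-\<^sup>j\<close> moves this defect to \<open>j - 1\<close> and \<open>j\<close>.\<close>
lemma actL_nudge_word:
  assumes n_ge_3: "3 \<le> n"
  and j: "1 \<le> j" "j \<le> n - 2" and "q < n"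
  shows "actL n (nudge_word n j) q = nudge j q"
proof -
  define v where "v = (q + (n - 2 - j)) mod n"
  have "v < n"
    using n_ge_3 by (simp add: v_def)
  then have result: "actL n (nudge_word n j) q = (deltaL n v a + Suc j) mod n"
    using \<open>q < n\<close> deltaL_closed[OF n_ge_3]
    by (simp add: nudge_word_def actL_replicate_b[OF n_ge_3] v_def del: replicate_Suc)
  consider "q + 2 \<le> j" | "Suc q = j" | "q = j" | "q = Suc j" | "j + 2 \<le> q"
    by linarith
  then show ?thesis
  proof cases
    case 1
    then have "v = q + (n - 2 - j)" "v + 4 \<le> n"
      using j by (simp_all add: v_def)
    then have "deltaL n v a + Suc j = q + n"
      using j deltaL_a_shift[of v] by simp
    then show ?thesis
      using result 1 \<open>q < n\<close> by (simp add: nudge_def)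
  next
    case 2
    then have "v = n - 3"
      using j by (simp add: v_def)
    then have "(deltaL n v a + Suc j) mod n = (j + n) mod n"
      using n_ge_3 deltaL_a_n3[OF n_ge_3] by simp
    then show ?thesis
      unfolding result using 2 j by (simp add: nudge_def)
  next
    case 3
    then have "v = n - 2"
      using j by (simp add: v_def)
    then show ?thesis
      using result 3 j deltaL_a_n2[OF n_ge_3] by (simp add: nudge_def)
  next
    case 4
    then have "v = n - 1"
      using j by (simp add: v_def)
    then show ?thesis
      using result 4 j deltaL_a_n1[OF n_ge_3] by (simp add: nudge_def)
  next
    case 5
    then have "q + (n - 2 - j) = (q - j - 2) + n"
      using j by simp
    then have "v = (q - j - 2 + n) mod n"
      unfolding v_def by (simp only:)
    then have "v = q - j - 2"
      using \<open>q < n\<close> by simp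
    moreover have "v + 4 \<le> n"
      using 5 j \<open>q < n\<close> calculation by linarith
    ultimately show ?thesis
      using result 5 deltaL_a_shift[of v] \<open>q < n\<close> by (simp add: nudge_def)
  qed
qed

lemma image_actL_nudge_word:
  assumes n_ge_3: "3 \<le> n"
  shows "1 \<le> j \<Longrightarrow> j \<le> n - 2 \<Longrightarrow> T \<subseteq> {0..<n} \<Longrightarrow> actL n (nudge_word n j) ` T = nudge j ` T"
  using actL_nudge_word[OF n_ge_3] by (intro image_cong) auto

lemma exists_word_merging_adjacent:
  assumes n_ge_3: "3 \<le> n"
    and "T \<subseteq> {1..<n}" "t \<in> T" "Suc t \<in> T"
  shows "\<exists>v. card (actL n v ` T) < card T \<and> actL n v 0 \<notin> actL n v ` T"
proof -
  have "finite T" "T \<subseteq> {0..<n}"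
    using assms(2) finite_subset by auto
  have t: "1 \<le> t" "t \<le> n - 2"
    using assms by auto
  have "nudge t t = nudge t (Suc t)"
    by (simp add: nudge_def)
  then have "card (nudge t ` T) < card T"
    using card_image_less_if_collision[OF \<open>finite T\<close> assms(3,4)] by simp
  moreover have "nudge t 0 \<notin> nudge t ` T"
    using assms(2) t by (auto simp: nudge_def)
  ultimately show ?thesis
    using image_actL_nudge_word[OF n_ge_3 t \<open>T \<subseteq> {0..<n}\<close>] actL_nudge_word[OF n_ge_3 t] n_ge_3
    by (intro exI[of _ "nudge_word n t"]) simp
qed

lemma actL_nudge_word_shift:
  assumes n_ge_3: "3 \<le> n"
    and "T \<subseteq> {1..<n}" "t \<in> T" "Suc t \<notin> T" "Suc t \<le> n - 2"
  shows "actL n (nudge_word n (Suc t)) ` T = insert (Suc t) (T - {t})"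
    and "card (insert (Suc t) (T - {t})) = card T"
    and "actL n (nudge_word n (Suc t)) 0 = 0"
proof -
  have "T \<subseteq> {0..<n}"
    using assms(2) by auto
  have "nudge (Suc t) ` T = insert (Suc t) (T - {t})"
    using assms(3,4) by (auto simp: nudge_def image_iff)
  then show "actL n (nudge_word n (Suc t)) ` T = insert (Suc t) (T - {t})"
    using image_actL_nudge_word[OF n_ge_3 _ assms(5) \<open>T \<subseteq> {0..<n}\<close>] by simp
  have "inj_on (nudge (Suc t)) T"
    using assms(4) by (auto simp: inj_on_def nudge_def)
  then show "card (insert (Suc t) (T - {t})) = card T"
    using \<open>nudge (Suc t) ` T = _\<close> card_image by metis
  have "1 \<le> t"
    using assms(2,3) by auto
  then show "actL n (nudge_word n (Suc t)) 0 = 0"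
    using actL_nudge_word[OF n_ge_3 _ assms(5)] n_ge_3 by (simp add: nudge_def)
qed

lemma exists_word_merging_gap:
  assumes n_ge_3: "3 \<le> n"
    and "T \<subseteq> {1..<n}" "t \<in> T" "s \<in> T" "t < s" "\<forall>i. t < i \<and> i < s \<longrightarrow> i \<notin> T"
  shows "\<exists>v. card (actL n v ` T) < card T \<and> actL n v 0 \<notin> actL n v ` T"
  using assms(2-)
proof (induction "s - t" arbitrary: t T)
  case 0
  then show ?case by simp
next
  case (Suc k)
  show ?case
  proof (cases "s = Suc t")
    case True
    then show ?thesis
      using exists_word_merging_adjacent[OF n_ge_3] Suc.prems(1-3) by blast
  next
    case False
    then have "Suc t \<notin> T" "Suc t < s"
      using Suc.prems(4,5) by auto
    then have "Suc t \<le> n - 2"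
      using Suc.prems(1,3) by auto
    define T' where "T' = insert (Suc t) (T - {t})"
    have "k = s - Suc t" "T' \<subseteq> {1..<n}" "Suc t \<in> T'" "s \<in> T'"
        "\<forall>i. Suc t < i \<and> i < s \<longrightarrow> i \<notin> T'"
      using Suc.hyps(2) Suc.prems \<open>Suc t < s\<close> \<open>Suc t \<le> n - 2\<close> by (auto simp: T'_def)
    then obtain v where v: "card (actL n v ` T') < card T'" "actL n v 0 \<notin> actL n v ` T'"
      using Suc.hyps(1) \<open>Suc t < s\<close> by blast
    note shift = actL_nudge_word_shift[OF n_ge_3 Suc.prems(1,2) \<open>Suc t \<notin> T\<close> \<open>Suc t \<le> n - 2\<close>,
        folded T'_def]
    have "actL n (nudge_word n (Suc t) @ v) ` T = actL n v ` T'"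
      unfolding act_append_image shift(1) ..
    then show ?thesis
      using v shift(2,3) by (intro exI[of _ "nudge_word n (Suc t) @ v"]) simp
  qed
qed

lemma exists_word_shrinking:
  assumes n_ge_3: "3 \<le> n"
    and "T \<subseteq> {1..<n}" "2 \<le> card T"
  shows "\<exists>v. card (actL n v ` T) < card T \<and> actL n v 0 \<notin> actL n v ` T"
proof -
  have "finite T" "T \<noteq> {}"
    using assms by (auto dest: finite_subset)
  define t where "t = Min T"
  have "t \<in> T"
    using \<open>finite T\<close> \<open>T \<noteq> {}\<close> by (simp add: t_def)
  have "T - {t} \<noteq> {}"
  proof
    assume "T - {t} = {}"
    then have "card T \<le> card {t}"
      by (intro card_mono) auto
    with assms(3) show False by simp
  qed
  define s where "s = Min (T - {t})"
  have "s \<in> T - {t}"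
    using Min_in[OF _ \<open>T - {t} \<noteq> {}\<close>] \<open>finite T\<close> by (simp add: s_def)
  moreover have "t \<le> s"
    using calculation \<open>finite T\<close> by (simp add: t_def)
  ultimately have "s \<in> T" "t < s"
    by auto
  moreover have "\<forall>i. t < i \<and> i < s \<longrightarrow> i \<notin> T"
  proof (intro allI impI)
    fix i assume "t < i \<and> i < s"
    show "i \<notin> T"
    proof
      assume "i \<in> T"
      then have "s \<le> i"
        using \<open>t < i \<and> i < s\<close> \<open>finite T\<close> by (simp add: s_def)
      with \<open>t < i \<and> i < s\<close> show False by simp
    qed
  qed
  ultimately show ?thesis
    using exists_word_merging_gap[OF n_ge_3 assms(2) \<open>t \<in> T\<close>] by blast
qed

lemma exists_word_separating:
  assumes n_ge_3: "3 \<le> n"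
  shows "T \<subseteq> {0..<n} \<Longrightarrow> T \<noteq> {} \<Longrightarrow> x \<in> {0..<n} - T \<Longrightarrow>
    \<exists>w. synchronizes (deltaL n) T w \<and> actL n w x \<notin> actL n w ` T"
proof (induction "card T" arbitrary: T x rule: less_induct)
  case less
  have "finite T"
    using less.prems(1) finite_subset by blast
  show ?case
  proof (cases "card T = 1")
    case True
    then show ?thesis
      using less.prems(3) by (intro exI[of _ "[]"]) (auto simp: card_1_singleton_iff synchronizes_def)
  next
    case False
    moreover have "card T \<noteq> 0"
      using \<open>finite T\<close> less.prems(2) by simp
    ultimately have "2 \<le> card T"
      by linarith
    define \<rho> where "\<rho> = replicate (n - x) b"
    have "actL n \<rho> x = 0"
      using less.prems(3) by (simp add: \<rho>_def actL_replicate_b[OF n_ge_3])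
    have bij: "bij_betw (actL n \<rho>) {0..<n} {0..<n}"
      unfolding \<rho>_def by (rule bij_actL_replicate_b[OF n_ge_3])
    have "actL n \<rho> y \<in> {1..<n}" if "y \<in> T" for y
    proof -
      have "y < n" "y \<noteq> x"
        using that less.prems(1,3) by auto
      then have "actL n \<rho> y \<noteq> actL n \<rho> x"
        using bij less.prems(3) by (auto simp: bij_betw_def inj_on_def)
      then show ?thesis
        using \<open>actL n \<rho> x = 0\<close> actL_closed[OF n_ge_3 \<open>y < n\<close>] by simp
    qed
    define T\<^sub>1 where "T\<^sub>1 = actL n \<rho> ` T"
    have "T\<^sub>1 \<subseteq> {1..<n}"
      unfolding T\<^sub>1_def using \<open>\<And>y. y \<in> T \<Longrightarrow> actL n \<rho> y \<in> {1..<n}\<close> by blast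
    have "inj_on (actL n \<rho>) T"
      using bij_betw_imp_inj_on[OF bij] less.prems(1) by (rule inj_on_subset)
    then have "2 \<le> card T\<^sub>1"
      using \<open>2 \<le> card T\<close> by (simp add: T\<^sub>1_def card_image)
    then obtain v where v: "card (actL n v ` T\<^sub>1) < card T\<^sub>1" "actL n v 0 \<notin> actL n v ` T\<^sub>1"
      using exists_word_shrinking[OF n_ge_3 \<open>T\<^sub>1 \<subseteq> {1..<n}\<close>] by blast
    define T\<^sub>2 where "T\<^sub>2 = actL n v ` T\<^sub>1"
    have "card T\<^sub>2 < card T"
      using v(1) \<open>inj_on (actL n \<rho>) T\<close> by (simp add: T\<^sub>2_def T\<^sub>1_def card_image)
    moreover have "T\<^sub>2 \<subseteq> {0..<n}" "T\<^sub>2 \<noteq> {}" "actL n v 0 \<in> {0..<n} - T\<^sub>2"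
      using v(2) actL_closed[OF n_ge_3] n_ge_3 less.prems(1,2) by (auto simp: T\<^sub>2_def T\<^sub>1_def)
    ultimately obtain w where w: "synchronizes (deltaL n) T\<^sub>2 w" "actL n w (actL n v 0) \<notin> actL n w ` T\<^sub>2"
      using less.hyps by blast
    have "synchronizes (deltaL n) T (\<rho> @ v @ w)"
      using w(1) by (simp only: synchronizes_append_iff T\<^sub>2_def T\<^sub>1_def)
    moreover have "actL n (\<rho> @ v @ w) x \<notin> actL n (\<rho> @ v @ w) ` T"
      using w(2) \<open>actL n \<rho> x = 0\<close> by (simp add: T\<^sub>2_def T\<^sub>1_def image_image)
    ultimately show ?thesis
      by blast
  qed
qed

lemma Syn_L_nonempty:
  assumes n_ge_3: "3 \<le> n"
  shows "Syn {0..<n} (deltaL n) \<noteq> {}"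
proof -
  have "0 \<in> {0..<n} - {n - 2}" "n - 2 \<in> {0..<n} - ({0..<n} - {n - 2})"
    using n_ge_3 by auto
  then obtain w where "synchronizes (deltaL n) ({0..<n} - {n - 2}) w"
    using exists_word_separating[OF n_ge_3, of "{0..<n} - {n - 2}"] by blast
  then have "synchronizes (deltaL n) {0..<n} ([a] @ w)"
    using image_actL_replicate_a[OF n_ge_3, of 0] synchronizes_append_iff[of "deltaL n" _ "[a]" w] by simp
  then show ?thesis
    by (auto simp: Syn_iff_synchronizes)
qed


lemma exists_larger_preimage:
  assumes n_ge_3: "3 \<le> n"
    and "S \<subseteq> {0..<n}" "y \<in> S" "(y + n - 1) mod n \<notin> S"
  shows "\<exists>u P. P \<subseteq> {0..<n} \<and> card S < card P \<and> actL n u ` P = S"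
proof -
  define \<rho> where "\<rho> = replicate (Suc y) b"
  define u where "u = replicate (n - 1) a @ \<rho>"
  have "y < n"
    using assms(2,3) by auto
  have bij: "bij_betw (actL n \<rho>) {0..<n} {0..<n}"
    unfolding \<rho>_def by (rule bij_actL_replicate_b[OF n_ge_3])
  have "n - 2 + Suc y = y + n - 1" "n - 1 + Suc y = y + n"
    using n_ge_3 by simp_all
  then have "actL n \<rho> (n - 2) = (y + n - 1) mod n" "actL n \<rho> (n - 1) = y"
    using n_ge_3 \<open>y < n\<close> by (simp_all add: \<rho>_def actL_replicate_b[OF n_ge_3] del: replicate_Suc)
  have "replicate (n - 1) a = replicate (Suc (n - 2)) a"
    using n_ge_3 by (simp add: numeral_2_eq_2 Suc_diff_Suc)
  then have "actL n u ` {0..<n} = actL n \<rho> ` ({0..<n} - {n - 2})"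
    unfolding u_def act_append_image by (simp only: image_actL_replicate_a[OF n_ge_3])
  also have "\<dots> = actL n \<rho> ` {0..<n} - actL n \<rho> ` {n - 2}"
    using n_ge_3 by (intro inj_on_image_set_diff[OF bij_betw_imp_inj_on[OF bij]]) auto
  also have "\<dots> = {0..<n} - {(y + n - 1) mod n}"
    using bij_betw_imp_surj_on[OF bij] \<open>actL n \<rho> (n - 2) = _\<close> by simp
  finally have "S \<subseteq> actL n u ` {0..<n}"
    using assms by auto
  define P where "P = {q \<in> {0..<n}. actL n u q \<in> S}"
  have "actL n u ` P = S"
    using \<open>S \<subseteq> actL n u ` {0..<n}\<close> by (auto simp: P_def)
  moreover have "actL n u (n - 2) = y" "actL n u (n - 1) = y"
    using actL_replicate_a_merge[OF n_ge_3] \<open>actL n \<rho> (n - 1) = y\<close> by (simp_all add: u_def)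
  then have "card (actL n u ` P) < card P"
    using n_ge_3 assms(3) by (intro card_image_less_if_collision[of P "n - 2" "n - 1"]) (auto simp: P_def)
  ultimately show ?thesis
    by (intro exI[of _ u] exI[of _ P]) (auto simp: P_def)
qed

lemma image_actL_reachable:
  assumes n_ge_3: "3 \<le> n"
  shows "S \<subseteq> {0..<n} \<Longrightarrow> 2 \<le> card S \<Longrightarrow> \<exists>w. actL n w ` {0..<n} = S"
proof (induction "n - card S" arbitrary: S rule: less_induct)
  case less
  show ?case
  proof (cases "S = {0..<n}")
    case True
    then show ?thesis
      by (intro exI[of _ "[]"]) simp
  next
    case False
    moreover have "S \<noteq> {}"
      using less.prems(2) by auto
    ultimately obtain y where y: "y \<in> S" "(y + n - 1) mod n \<notin> S"
      using pred_mod_closed_eq_atLeastLessThan[OF less.prems(1)] by blast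
    obtain u P where P: "P \<subseteq> {0..<n}" "card S < card P" "actL n u ` P = S"
      using exists_larger_preimage[OF n_ge_3 less.prems(1) y] by blast
    have "card P \<le> n"
      using card_mono[OF _ \<open>P \<subseteq> {0..<n}\<close>] by simp
    then have "n - card P < n - card S"
      using P(2) by linarith
    moreover have "2 \<le> card P"
      using P(2) less.prems(2) by linarith
    ultimately obtain w where "actL n w ` {0..<n} = P"
      using less.hyps[OF _ P(1)] by blast
    then show ?thesis
      using \<open>actL n u ` P = S\<close> by (intro exI[of _ "w @ u"]) (simp only: act_append_image)
  qed
qed

subsection \<open>Renumbering and lower bounds for complete DFAs\<close>

lemma sc_eqI:
  assumes "is_dfa m s t F" "dfa_lang s t F = L"
    and "\<And>m' s' t' F'. is_dfa m' s' t' F' \<Longrightarrow> dfa_lang s' t' F' = L \<Longrightarrow> m \<le> m'"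
  shows "sc L = m"
  unfolding sc_def by (rule Least_equality) (use assms in blast)+

lemma dfa_of_finite_automaton:
  assumes "finite A" "a\<^sub>0 \<in> A" and closed: "\<And>U x. U \<in> A \<Longrightarrow> f U x \<in> A"
  shows "\<exists>s t F. is_dfa (card A) s t F \<and> dfa_lang s t F = {w. foldl f a\<^sub>0 w \<in> Acc}"
proof -
  obtain h where h: "bij_betw h A {0..<card A}"
    using ex_bij_betw_finite_nat[OF \<open>finite A\<close>] by blast
  define t where "t q x = h (f (inv_into A h q) x)" for q x
  have h_in: "h U < card A" if "U \<in> A" for U
    using bij_betw_apply[OF h that] by simp
  have inv_in: "inv_into A h q \<in> A" if "q < card A" for q
    using bij_betw_apply[OF bij_betw_inv_into[OF h]] that by simp
  have run: "delta_star t (h U) w = h (foldl f U w)" if "U \<in> A" for U w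
    using that
  proof (induction w arbitrary: U)
    case (Cons x w)
    then show ?case
      using bij_betw_inv_into_left[OF h] closed by (simp add: t_def delta_star_def)
  qed simp
  have foldl_in: "foldl f U w \<in> A" if "U \<in> A" for U w
    using that by (induction w arbitrary: U) (simp_all add: closed)
  have "is_dfa (card A) (h a\<^sub>0) t (h ` (Acc \<inter> A))"
    unfolding is_dfa_def t_def using h_in inv_in \<open>a\<^sub>0 \<in> A\<close> closed by auto
  moreover have "dfa_lang (h a\<^sub>0) t (h ` (Acc \<inter> A)) = {w. foldl f a\<^sub>0 w \<in> Acc}"
    using run[OF \<open>a\<^sub>0 \<in> A\<close>] foldl_in[OF \<open>a\<^sub>0 \<in> A\<close>] bij_betw_imp_inj_on[OF h]
    by (auto simp: dfa_lang_def inj_on_image_mem_iff)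
  ultimately show ?thesis by blast
qed

lemma card_le_dfa_states_if_distinguishable:
  assumes dfa: "is_dfa m s t F" "dfa_lang s t F = L"
    and distinct: "\<And>U V. U \<in> A \<Longrightarrow> V \<in> A \<Longrightarrow> U \<noteq> V \<Longrightarrow> \<exists>z. (u U @ z \<in> L) \<noteq> (u V @ z \<in> L)"
  shows "card A \<le> m"
proof -
  define \<phi> where "\<phi> U = delta_star t s (u U)" for U
  have "inj_on \<phi> A"
  proof (rule inj_onI, rule ccontr)
    fix U V assume "U \<in> A" "V \<in> A" "\<phi> U = \<phi> V" "U \<noteq> V"
    then show False
      using distinct[of U V] dfa(2) by (auto simp: \<phi>_def dfa_lang_def)
  qed
  moreover have "\<phi> ` A \<subseteq> {0..<m}"
    using dfa(1) delta_star_closed[of "{..<m}" t s] by (auto simp: \<phi>_def is_dfa_def)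
  ultimately show ?thesis
    using card_inj_on_le[of \<phi> A "{0..<m}"] by simp
qed

definition nonsingleton_subsets :: "'q set \<Rightarrow> 'q set set" where
  "nonsingleton_subsets Q = Pow Q - (\<lambda>q. {q}) ` Q"

lemma finite_nonsingleton_subsets: "finite Q \<Longrightarrow> finite (nonsingleton_subsets Q)"
  by (simp add: nonsingleton_subsets_def)

lemma card_nonsingleton_subsets:
  "finite Q \<Longrightarrow> card (nonsingleton_subsets Q) = 2 ^ card Q - card Q"
  unfolding nonsingleton_subsets_def
  by (subst card_Diff_subset) (auto simp: card_Pow card_image inj_on_def)

lemma nonsingleton_subsets_iff:
  assumes "finite Q"
  shows "U \<in> nonsingleton_subsets Q \<longleftrightarrow> U \<subseteq> Q \<and> (U = {} \<or> 2 \<le> card U)"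
proof -
  have "U \<in> (\<lambda>q. {q}) ` Q \<longleftrightarrow> card U = 1" if "U \<subseteq> Q"
    using that by (auto simp: card_1_singleton_iff)
  moreover have "card U \<noteq> 0" if "U \<subseteq> Q" "U \<noteq> {}"
    using that assms finite_subset by fastforce
  ultimately show ?thesis
    unfolding nonsingleton_subsets_def by fastforce
qed

text \<open>Sets of at most one state are all identified with \<open>{}\<close>, the sink of the subset automaton
  of the synchronizing language.\<close>
definition collapse :: "'q set \<Rightarrow> 'q set" where
  "collapse U = (if card U \<le> 1 then {} else U)"

definition collapsed_step :: "('q \<Rightarrow> 's \<Rightarrow> 'q) \<Rightarrow> 'q set \<Rightarrow> 's \<Rightarrow> 'q set" where
  "collapsed_step \<delta> U x = collapse ((\<lambda>q. \<delta> q x) ` U)"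

lemma collapse_eq_empty_iff: "collapse U = {} \<longleftrightarrow> card U \<le> 1"
  by (auto simp: collapse_def)

lemma foldl_collapsed_step:
  "finite U \<Longrightarrow> foldl (collapsed_step \<delta>) (collapse U) w = collapse (act \<delta> w ` U)"
proof (induction w arbitrary: U)
  case (Cons x w)
  have "collapsed_step \<delta> (collapse U) x = collapse ((\<lambda>q. \<delta> q x) ` U)"
    using card_image_le[OF Cons.prems, of "\<lambda>q. \<delta> q x"]
    by (auto simp: collapsed_step_def collapse_def)
  then show ?case
    using Cons.IH[of "(\<lambda>q. \<delta> q x) ` U"] Cons.prems by (simp add: image_image)
qed simp

lemma Syn_dfa_exists:
  assumes "finite Q" "2 \<le> card Q" and closed: "\<And>q x. q \<in> Q \<Longrightarrow> \<delta> q x \<in> Q"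
  shows "\<exists>s t F. is_dfa (card (nonsingleton_subsets Q)) s t F \<and> dfa_lang s t F = Syn Q \<delta>"
proof -
  have "collapsed_step \<delta> U x \<in> nonsingleton_subsets Q" if "U \<in> nonsingleton_subsets Q" for U x
    using that closed \<open>finite Q\<close>
    by (auto simp: nonsingleton_subsets_iff collapsed_step_def collapse_def)
  moreover have "Q \<in> nonsingleton_subsets Q"
    using assms by (simp add: nonsingleton_subsets_iff)
  ultimately obtain s t F where dfa: "is_dfa (card (nonsingleton_subsets Q)) s t F"
    and lang: "dfa_lang s t F = {w. foldl (collapsed_step \<delta>) Q w \<in> {{}}}"
    using dfa_of_finite_automaton[of "nonsingleton_subsets Q" Q "collapsed_step \<delta>" "{{}}"]
      finite_nonsingleton_subsets[OF \<open>finite Q\<close>] by blast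
  have "collapse Q = Q"
    using assms(2) by (simp add: collapse_def)
  then have "foldl (collapsed_step \<delta>) Q w \<in> {{}} \<longleftrightarrow> w \<in> Syn Q \<delta>" for w
    using foldl_collapsed_step[OF \<open>finite Q\<close>, of \<delta> w] \<open>finite Q\<close>
    by (simp add: collapse_eq_empty_iff Syn_iff_synchronizes synchronizes_iff_card_image_le_1)
  with dfa lang show ?thesis by blast
qed

theorem sc_Syn_eq:
  assumes "finite Q" "2 \<le> card Q" and closed: "\<And>q x. q \<in> Q \<Longrightarrow> \<delta> q x \<in> Q"
    and synchronizing: "Syn Q \<delta> \<noteq> {}"
    and reachable: "\<And>S. S \<subseteq> Q \<Longrightarrow> 2 \<le> card S \<Longrightarrow> \<exists>w. act \<delta> w ` Q = S"
    and separating: "\<And>T x. T \<subseteq> Q \<Longrightarrow> T \<noteq> {} \<Longrightarrow> x \<in> Q - T \<Longrightarrow>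
      \<exists>w. synchronizes \<delta> T w \<and> delta_star \<delta> x w \<notin> act \<delta> w ` T"
  shows "sc (Syn Q \<delta>) = 2 ^ card Q - card Q"
proof -
  let ?A = "nonsingleton_subsets Q"
  have residual: "\<exists>u. \<forall>z. u @ z \<in> Syn Q \<delta> \<longleftrightarrow> synchronizes \<delta> U z" if "U \<in> ?A" for U
  proof (cases "U = {}")
    case True
    from synchronizing obtain w where "w \<in> Syn Q \<delta>" by blast
    then have "w @ z \<in> Syn Q \<delta>" for z
      by (rule Syn_append_closed)
    then show ?thesis
      using True by (intro exI[of _ w]) (simp add: synchronizes_def)
  next
    case False
    then have "U \<subseteq> Q" "2 \<le> card U"
      using that \<open>finite Q\<close> by (simp_all add: nonsingleton_subsets_iff)
    then obtain w where "act \<delta> w ` Q = U"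
      using reachable by blast
    then show ?thesis by (intro exI[of _ w]) (simp add: append_in_Syn_iff)
  qed
  have separated: "\<exists>z. \<not> synchronizes \<delta> U z \<and> synchronizes \<delta> V z"
    if "U \<in> ?A" "V \<in> ?A" "x \<in> U" "x \<notin> V" for U V x
  proof -
    have "2 \<le> card U" "U \<subseteq> Q" "V \<subseteq> Q"
      using that \<open>finite Q\<close> by (auto simp: nonsingleton_subsets_iff)
    have "\<not> U \<subseteq> {x}"
      using \<open>2 \<le> card U\<close> card_mono[of "{x}" U] by auto
    then obtain y where "y \<in> U" "y \<noteq> x" by auto
    moreover have "insert y V \<subseteq> Q" "x \<in> Q - insert y V"
      using \<open>U \<subseteq> Q\<close> \<open>V \<subseteq> Q\<close> that(3,4) \<open>y \<in> U\<close> \<open>y \<noteq> x\<close> by auto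
    ultimately obtain z where "synchronizes \<delta> (insert y V) z"
        "delta_star \<delta> x z \<notin> act \<delta> z ` insert y V"
      using separating[of "insert y V" x] by blast
    then have "\<not> synchronizes \<delta> U z"
      using \<open>x \<in> U\<close> \<open>y \<in> U\<close> unfolding synchronizes_def by blast
    moreover have "synchronizes \<delta> V z"
      using synchronizes_subset[OF \<open>synchronizes \<delta> (insert y V) z\<close>] by blast
    ultimately show ?thesis by blast
  qed
  obtain u where u: "\<And>U z. U \<in> ?A \<Longrightarrow> u U @ z \<in> Syn Q \<delta> \<longleftrightarrow> synchronizes \<delta> U z"
    using residual by metis
  have "\<exists>z. (u U @ z \<in> Syn Q \<delta>) \<noteq> (u V @ z \<in> Syn Q \<delta>)"
    if UV: "U \<in> ?A" "V \<in> ?A" "U \<noteq> V" for U V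
  proof -
    from \<open>U \<noteq> V\<close> consider x where "x \<in> U" "x \<notin> V" | x where "x \<in> V" "x \<notin> U"
      by blast
    then obtain z where "synchronizes \<delta> U z \<noteq> synchronizes \<delta> V z"
    proof cases
      case 1
      with separated[OF UV(1,2)] that show ?thesis by blast
    next
      case 2
      with separated[OF UV(2,1)] that show ?thesis by blast
    qed
    then show ?thesis
      using u[OF UV(1)] u[OF UV(2)] by blast
  qed
  then have lower: "card ?A \<le> m" if "is_dfa m s t F" "dfa_lang s t F = Syn Q \<delta>" for m s t F
    using card_le_dfa_states_if_distinguishable[OF that] by blast
  obtain s t F where "is_dfa (card ?A) s t F" "dfa_lang s t F = Syn Q \<delta>"
    using Syn_dfa_exists[of Q \<delta>, OF assms(1,2) closed] by blast
  then have "sc (Syn Q \<delta>) = card ?A"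
    using lower by (rule sc_eqI)
  then show ?thesis
    using card_nonsingleton_subsets[OF \<open>finite Q\<close>] by simp
qed

theorem proposition3:
  fixes n :: nat
  assumes "n \<ge> 3"
  shows "sc (Syn {0..<n} (deltaL n)) = 2 ^ n - n"
proof -
  have "sc (Syn {0..<n} (deltaL n)) = 2 ^ card {0..<n} - card {0..<n}"
  proof (rule sc_Syn_eq)
    show "finite {0..<n}" "2 \<le> card {0..<n}"
      using assms by simp_all
    show "deltaL n q x \<in> {0..<n}" if "q \<in> {0..<n}" for q x
      using deltaL_closed[OF assms] that by simp
    show "Syn {0..<n} (deltaL n) \<noteq> {}"
      by (rule Syn_L_nonempty[OF assms])
    show "\<exists>w. act (deltaL n) w ` {0..<n} = S" if "S \<subseteq> {0..<n}" "2 \<le> card S" for S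
      using image_actL_reachable[OF assms that] .
    show "\<exists>w. synchronizes (deltaL n) T w \<and> delta_star (deltaL n) x w \<notin> act (deltaL n) w ` T"
      if "T \<subseteq> {0..<n}" "T \<noteq> {}" "x \<in> {0..<n} - T" for T x
      using exists_word_separating[OF assms that] .
  qed
  then show ?thesis
    by simp
qed

end
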